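(* Let $(a_n)_{n\in\mathbb Z}$ be a complex sequence with $a_n=0$ for $n<0$ and $a_0=1$, and let $a$ be a nonzero complex number. For integers $k$ and $N\ge 0$ put $v_k(N)=\det\bigl(a_{i+j+k-N}\bigr)_{i,j=0}^{N-1}$. Suppose that $v_2(n)=(-1)^{\binom{n-1}{2}}\,a\,C_{n-1}$ for all $n\ge 1$. Then for all integers $n\ge 0$ and $k\ge 1$, $$v_k(n+k)=(-1)^{\binom{n+1}{2}}\,a^{k-1}\,p_{n+1}(k-1).$$
   Context: $C_n=\frac{1}{n+1}\binom{2n}{n}$ denotes the $n$-th Catalan number. The determinant of a $0\times0$ matrix is $1$. For integers $m,n\ge 0$, $p_m(n)=\prod_{1\le i\le j\le m-1}\frac{2n+i+j}{i+j}$ (empty product $=1$). Note $v_k(N)$ is the determinant of the $N\times N$ Hankel matrix whose first row is $(a_{k-N},a_{k-N+1},\dots,a_{k-1})$. *)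

theory Defs
  imports Complex_Main "Jordan_Normal_Form.Determinant"
begin

definition catalan :: "nat \<Rightarrow> complex" where
  "catalan n = of_nat ((2*n) choose n) / of_nat (n+1)"

definition pprod :: "nat \<Rightarrow> nat \<Rightarrow> complex" where
  "pprod m n = (\<Prod>(i,j)\<in>{(i,j). 1 \<le> i \<and> i \<le> j \<and> j + 1 \<le> m}.
       of_nat (2*n + i + j) / of_nat (i + j))"

definition hankel_v :: "(int \<Rightarrow> complex) \<Rightarrow> int \<Rightarrow> nat \<Rightarrow> complex" where
  "hankel_v a k N = det (mat N N (\<lambda>(i,j). a (int i + int j + k - int N)))"

end

theory Submission
  imports Defs
begin

text \<open>For fixed \<open>n\<close>, i.e. along a diagonal \<open>N - k = n\<close>, the Hankel determinants obey the
  Desnanot--Jacobi (Dodgson condensation) identity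
  \<open>v\<^sub>k(N+2) v\<^sub>k(N) = v\<^sub>k\<^sub>-\<^sub>1(N+1) v\<^sub>k\<^sub>+\<^sub>1(N+1) - v\<^sub>k(N+1)\<^sup>2\<close>.
  The claimed closed form satisfies the same recurrence, because
  \<open>p\<^sub>n\<^sub>+\<^sub>3(j+1) p\<^sub>n\<^sub>+\<^sub>1(j+1) = p\<^sub>n\<^sub>+\<^sub>1(j+2) p\<^sub>n\<^sub>+\<^sub>3(j) + p\<^sub>n\<^sub>+\<^sub>2(j+1)\<^sup>2\<close>,
  a rational identity once everything is expressed through the ratios \<open>p\<^sub>m(N) / p\<^sub>m(N+1)\<close> and
  \<open>p\<^sub>m\<^sub>+\<^sub>1(N) / p\<^sub>m(N)\<close>. Both agree for \<open>k = 1\<close>, where the matrix is anti-triangular with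
  unit anti-diagonal, and for \<open>k = 2\<close>, which is the hypothesis because \<open>C\<^sub>n = p\<^sub>n(1)\<close>.
  Since the closed form never vanishes, the recurrence determines each row from the previous two.\<close>

section \<open>The Desnanot--Jacobi identity\<close>

lemma det_col_single_entry:
  fixes A :: "'a::comm_ring_1 mat"
  assumes A: "A \<in> carrier_mat n n" and i: "i < n" and j: "j < n"
    and zero: "\<And>r. r < n \<Longrightarrow> r \<noteq> i \<Longrightarrow> A $$ (r, j) = 0"
  shows "det A = A $$ (i, j) * cofactor A i j"
proof -
  have "det A = (\<Sum>r<n. A $$ (r, j) * cofactor A r j)" by (rule laplace_expansion_column[OF A j])
  also have "\<dots> = (\<Sum>r<n. if r = i then A $$ (i, j) * cofactor A i j else 0)"
    by (rule sum.cong) (auto simp: zero)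
  finally show ?thesis using i by simp
qed

lemma det_row_single_entry:
  fixes A :: "'a::comm_ring_1 mat"
  assumes A: "A \<in> carrier_mat n n" and i: "i < n" and j: "j < n"
    and zero: "\<And>c. c < n \<Longrightarrow> c \<noteq> j \<Longrightarrow> A $$ (i, c) = 0"
  shows "det A = A $$ (i, j) * cofactor A i j"
proof -
  have "det A = (\<Sum>c<n. A $$ (i, c) * cofactor A i c)" by (rule laplace_expansion_row[OF A i])
  also have "\<dots> = (\<Sum>c<n. if c = j then A $$ (i, j) * cofactor A i j else 0)"
    by (rule sum.cong) (auto simp: zero)
  finally show ?thesis using j by simp
qed

lemma det_zero_col:
  fixes A :: "'a::comm_ring_1 mat"
  assumes A: "A \<in> carrier_mat n n" and j: "j < n" and zero: "\<And>r. r < n \<Longrightarrow> A $$ (r, j) = 0"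
  shows "det A = 0"
  using laplace_expansion_column[OF A j] by (simp add: zero)

lemma det_one_mat_replace_outer_cols:
  fixes u w :: "nat \<Rightarrow> 'a::comm_ring_1"
  shows "det (mat (n+2) (n+2) (\<lambda>(i, j). if j = 0 then u i else if j = n+1 then w i
            else if i = j then 1 else 0))
       = u 0 * w (n+1) - w 0 * u (n+1)"
    (is "det ?B = _")
proof -
  have B: "?B \<in> carrier_mat (n+2) (n+2)" by simp
  have inner_cofactor: "cofactor ?B r (n+1) = 0" if "r \<in> {..<n+2} - {0, n+1}" for r
    unfolding cofactor_def
    using det_zero_col[of "mat_delete ?B r (n+1)" "n+1" r] that by (simp add: mat_delete_def)
  have "det ?B = (\<Sum>r<n+2. ?B $$ (r, n+1) * cofactor ?B r (n+1))"
    by (rule laplace_expansion_column[OF B]) simp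
  also have "\<dots> = (\<Sum>r\<in>{0, n+1}. ?B $$ (r, n+1) * cofactor ?B r (n+1))"
    by (rule sum.mono_neutral_right) (use inner_cofactor in auto)
  also have "\<dots> = w 0 * cofactor ?B 0 (n+1) + w (n+1) * cofactor ?B (n+1) (n+1)"
    by simp
  also have "cofactor ?B (n+1) (n+1) = u 0"
  proof -
    define E where "E = mat_delete ?B (n+1) (n+1)"
    have E: "E \<in> carrier_mat (n+1) (n+1)" unfolding E_def by (simp add: mat_delete_def)
    have "det E = E $$ (0, 0) * cofactor E 0 0"
      by (rule det_row_single_entry[OF E]) (auto simp: E_def mat_delete_def)
    moreover have "mat_delete E 0 0 = 1\<^sub>m n"
      by (rule eq_matI) (auto simp: E_def mat_delete_def)
    ultimately have "det E = u 0"
      by (simp add: cofactor_def E_def mat_delete_def)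
    then show ?thesis by (simp add: cofactor_def E_def flip: mult_2)
  qed
  also have "cofactor ?B 0 (n+1) = - u (n+1)"
  proof -
    define E where "E = mat_delete ?B 0 (n+1)"
    have E: "E \<in> carrier_mat (n+1) (n+1)" unfolding E_def by (simp add: mat_delete_def)
    have "det E = E $$ (n, 0) * cofactor E n 0"
      by (rule det_row_single_entry[OF E]) (auto simp: E_def mat_delete_def)
    moreover have "mat_delete E n 0 = 1\<^sub>m n"
      by (rule eq_matI) (auto simp: E_def mat_delete_def)
    ultimately have "det E = (-1)^n * u (n+1)"
      by (simp add: cofactor_def E_def mat_delete_def)
    then show ?thesis
      by (simp add: cofactor_def E_def flip: mult.assoc power_add mult_2)
  qed
  finally show ?thesis by (simp add: algebra_simps)
qed

lemma det_scaled_unit_outer_cols: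
  fixes M :: "'a::comm_ring_1 mat"
  shows "det (mat (n+2) (n+2) (\<lambda>(i, j). if j = 0 then (if i = 0 then d else 0)
            else if j = n+1 then (if i = n+1 then d else 0) else M $$ (i, j)))
       = d^2 * det (mat n n (\<lambda>(i, j). M $$ (i+1, j+1)))"
    (is "det ?C = _")
proof -
  have C: "?C \<in> carrier_mat (n+2) (n+2)" by simp
  define D where "D = mat_delete ?C 0 0"
  have D: "D \<in> carrier_mat (n+1) (n+1)" unfolding D_def by (simp add: mat_delete_def)
  have "det ?C = d * det D"
    using det_col_single_entry[OF C, of 0 0] by (simp add: cofactor_def D_def)
  also have "det D = D $$ (n, n) * cofactor D n n"
    by (rule det_col_single_entry[OF D]) (auto simp: D_def mat_delete_def)
  also have "mat_delete D n n = mat n n (\<lambda>(i, j). M $$ (i+1, j+1))"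
    by (rule eq_matI) (auto simp: D_def mat_delete_def)
  then have "D $$ (n, n) * cofactor D n n = d * det (mat n n (\<lambda>(i, j). M $$ (i+1, j+1)))"
    by (simp add: cofactor_def D_def mat_delete_def flip: mult_2)
  finally show ?thesis by (simp add: power2_eq_square)
qed

lemma mult_adj_outer_cols:
  fixes M :: "'a::comm_ring_1 mat"
  assumes M: "M \<in> carrier_mat (n+2) (n+2)"
  shows "M * mat (n+2) (n+2) (\<lambda>(i, j). if j = 0 then adj_mat M $$ (i, 0)
            else if j = n+1 then adj_mat M $$ (i, n+1) else if i = j then 1 else 0)
       = mat (n+2) (n+2) (\<lambda>(i, j). if j = 0 then (if i = 0 then det M else 0)
            else if j = n+1 then (if i = n+1 then det M else 0) else M $$ (i, j))"
    (is "M * ?B = ?C")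
proof (rule eq_matI)
  have A: "adj_mat M \<in> carrier_mat (n+2) (n+2)" and B: "?B \<in> carrier_mat (n+2) (n+2)"
    using adj_mat[OF M] by auto
  fix i j assume "i < dim_row ?C" "j < dim_col ?C"
  then have i: "i < n+2" and j: "j < n+2" by auto
  have col: "(M * X) $$ (i, j) = (\<Sum>k<n+2. M $$ (i, k) * X $$ (k, j))"
    if "X \<in> carrier_mat (n+2) (n+2)" for X
    using M that i j by (auto simp: scalar_prod_def atLeast0LessThan intro!: sum.cong)
  show "(M * ?B) $$ (i, j) = ?C $$ (i, j)"
  proof (cases "j = 0 \<or> j = n+1")
    case True
    then have "(M * ?B) $$ (i, j) = (M * adj_mat M) $$ (i, j)"
      unfolding col[OF B] col[OF A] by (auto intro!: sum.cong)
    with True i j show ?thesis unfolding adj_mat(2)[OF M] by auto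
  next
    case False
    then have "(M * ?B) $$ (i, j) = (\<Sum>k<n+2. if k = j then M $$ (i, j) else 0)"
      unfolding col[OF B] by (intro sum.cong) (use j in auto)
    with False i j show ?thesis by simp
  qed
qed (use M in auto)

text \<open>Jacobi's argument: multiplying \<open>M\<close> by the identity matrix whose outer columns are replaced
  by those of \<open>adj_mat M\<close> leaves only the inner minor of \<open>M\<close>, while the second factor has the
  determinant of a $2 \times 2$ minor of \<open>adj_mat M\<close>.\<close>

theorem desnanot_jacobi:
  fixes M :: "'a::idom mat"
  assumes M: "M \<in> carrier_mat (n+2) (n+2)" and det_nz: "det M \<noteq> 0"
  shows "det M * det (mat n n (\<lambda>(i, j). M $$ (i+1, j+1))) =
     det (mat_delete M 0 0) * det (mat_delete M (n+1) (n+1))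
     - det (mat_delete M 0 (n+1)) * det (mat_delete M (n+1) 0)"
proof -
  define B where "B = mat (n+2) (n+2) (\<lambda>(i, j). if j = 0 then adj_mat M $$ (i, 0)
      else if j = n+1 then adj_mat M $$ (i, n+1) else if i = j then 1 else 0)"
  have B: "B \<in> carrier_mat (n+2) (n+2)" unfolding B_def by simp
  have adj_entry: "adj_mat M $$ (i, j) = cofactor M j i" if "i < n+2" "j < n+2" for i j
    using that M unfolding adj_mat_def by auto
  have "det B = cofactor M 0 0 * cofactor M (n+1) (n+1) - cofactor M (n+1) 0 * cofactor M 0 (n+1)"
    unfolding B_def det_one_mat_replace_outer_cols by (simp add: adj_entry)
  also have "\<dots> = det (mat_delete M 0 0) * det (mat_delete M (n+1) (n+1))
     - det (mat_delete M 0 (n+1)) * det (mat_delete M (n+1) 0)"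
    by (simp add: cofactor_def flip: mult.assoc power_add mult_2)
  finally have det_B: "det B = \<dots>" .
  have "det M * det B = det M * (det M * det (mat n n (\<lambda>(i, j). M $$ (i+1, j+1))))"
    using det_mult[OF M B] unfolding B_def mult_adj_outer_cols[OF M] det_scaled_unit_outer_cols
    by (simp add: power2_eq_square) metis
  with det_nz show ?thesis unfolding det_B by simp
qed

section \<open>Hankel determinants\<close>

definition hankel_mat :: "(int \<Rightarrow> 'a) \<Rightarrow> int \<Rightarrow> nat \<Rightarrow> 'a mat" where
  "hankel_mat a k N = mat N N (\<lambda>(i, j). a (int i + int j + k - int N))"

lemma hankel_v_eq_det: "hankel_v a k N = det (hankel_mat a k N)"
  by (simp add: hankel_v_def hankel_mat_def)

lemma hankel_mat_carrier: "hankel_mat a k N \<in> carrier_mat N N"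
  by (simp add: hankel_mat_def)

lemma hankel_mat_minors:
  "mat_delete (hankel_mat a k (N+2)) 0 0 = hankel_mat a (k+1) (N+1)"
  "mat_delete (hankel_mat a k (N+2)) (N+1) (N+1) = hankel_mat a (k-1) (N+1)"
  "mat_delete (hankel_mat a k (N+2)) 0 (N+1) = hankel_mat a k (N+1)"
  "mat_delete (hankel_mat a k (N+2)) (N+1) 0 = hankel_mat a k (N+1)"
  "mat N N (\<lambda>(i, j). hankel_mat a k (N+2) $$ (i+1, j+1)) = hankel_mat a k N"
  by (auto simp: hankel_mat_def mat_delete_def intro!: eq_matI arg_cong[where f=a])

lemma hankel_v_desnanot_jacobi:
  assumes "hankel_v a k (N+2) \<noteq> 0"
  shows "hankel_v a k (N+2) * hankel_v a k N
       = hankel_v a (k-1) (N+1) * hankel_v a (k+1) (N+1) - hankel_v a k (N+1)^2"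
  using desnanot_jacobi[OF hankel_mat_carrier, of a k N] assms
  unfolding hankel_v_eq_det hankel_mat_minors by (simp add: power2_eq_square mult.commute)

lemma hankel_v_diagonal_recurrence:
  fixes a :: "int \<Rightarrow> complex"
  defines "u \<equiv> \<lambda>K n. hankel_v a (int (K+1)) (n+K+1)"
  assumes "u (K+1) (n+2) \<noteq> 0"
  shows "u K (n+2) * u (K+2) n = u (K+1) (n+2) * u (K+1) n + u (K+1) (n+1)^2"
proof -
  have "u (K+1) (n+2) * u (K+1) n = u K (n+2) * u (K+2) n - u (K+1) (n+1)^2"
    using hankel_v_desnanot_jacobi[of a "int (K+2)" "n+K+2"] assms
    by (simp add: u_def algebra_simps)
  then show ?thesis by (simp add: algebra_simps)
qed

lemma hankel_v_one:
  assumes "\<And>n. n < 0 \<Longrightarrow> a n = 0" and "a 0 = 1"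
  shows "hankel_v a 1 n = (-1) ^ (n choose 2)"
proof (induction n)
  case 0
  show ?case by (simp add: hankel_v_def numeral_2_eq_2)
next
  case (Suc n)
  have "det (hankel_mat a 1 (Suc n)) = hankel_mat a 1 (Suc n) $$ (n, 0) * cofactor (hankel_mat a 1 (Suc n)) n 0"
    by (rule det_col_single_entry[OF hankel_mat_carrier]) (auto simp: hankel_mat_def assms(1))
  moreover have "mat_delete (hankel_mat a 1 (Suc n)) n 0 = hankel_mat a 1 n"
    by (auto simp: hankel_mat_def mat_delete_def intro!: eq_matI arg_cong[where f=a])
  ultimately have "hankel_v a 1 (Suc n) = (-1)^n * hankel_v a 1 n"
    by (simp add: hankel_v_eq_det hankel_mat_def assms(2) cofactor_def)
  with Suc.IH show ?case by (simp add: numeral_2_eq_2 power_add)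
qed

lemma condensation_recurrence_unique:
  fixes u v :: "nat \<Rightarrow> nat \<Rightarrow> 'a::field"
  assumes u_rec: "\<And>K n. u (K+1) (n+2) \<noteq> 0 \<Longrightarrow>
      u K (n+2) * u (K+2) n = u (K+1) (n+2) * u (K+1) n + u (K+1) (n+1)^2"
    and v_rec: "\<And>K n. v K (n+2) * v (K+2) n = v (K+1) (n+2) * v (K+1) n + v (K+1) (n+1)^2"
    and v_nz: "\<And>K n. v K n \<noteq> 0"
    and init: "u 0 = v 0" "u 1 = v 1"
  shows "u = v"
proof -
  have "u K = v K \<and> u (K+1) = v (K+1)" for K
  proof (induction K)
    case 0
    show ?case using init by simp
  next
    case (Suc K)
    then have uK: "u K = v K" and uK1: "u (K+1) = v (K+1)" by simp_all
    have "u (K+2) n = v (K+2) n" for n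
    proof -
      have "v K (n+2) * u (K+2) n = v K (n+2) * v (K+2) n"
        using u_rec[of K n] v_rec[of K n] v_nz[of "K+1" "n+2"] unfolding uK uK1 by simp
      with v_nz[of K "n+2"] show ?thesis by simp
    qed
    with uK1 show ?case by auto
  qed
  then show ?thesis by auto
qed

section \<open>The products \<open>p\<^sub>m(n)\<close>\<close>

lemma of_nat_frac_eq:
  fixes a b c d :: nat
  assumes "b \<noteq> 0" "d \<noteq> 0" "a * d = c * b"
  shows "(of_nat a / of_nat b :: 'a::field_char_0) = of_nat c / of_nat d"
proof -
  have "(of_nat a * of_nat d :: 'a) = of_nat c * of_nat b" by (metis assms(3) of_nat_mult)
  thus ?thesis using assms(1,2) by (simp add: field_simps)
qed

lemma of_nat_frac_mult:
  "(of_nat a / of_nat b * (of_nat c / of_nat d) :: 'a::field_char_0) = of_nat (a * c) / of_nat (b * d)"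
  by simp

definition pfactor :: "nat \<Rightarrow> nat \<Rightarrow> 'a::field_char_0" where
  "pfactor N j = (\<Prod>i\<in>{1..j}. of_nat (2*N + i + j) / of_nat (i + j))"

lemma prod_shift_mult_fact: "(\<Prod>i\<in>{1..j}. b + i) * fact b = fact (b + j)"
proof (induction j)
  case (Suc j)
  have "(\<Prod>i\<in>{1..Suc j}. b + i) * fact b = ((\<Prod>i\<in>{1..j}. b + i) * fact b) * Suc (b + j)"
    by (simp add: prod.cl_ivl_Suc algebra_simps)
  also have "\<dots> = fact (b + Suc j)" using Suc.IH by (simp add: algebra_simps)
  finally show ?case .
qed simp

lemma pfactor_eq_fact:
  "pfactor N j = (of_nat (fact (2*N + 2*j) * fact j) / of_nat (fact (2*N + j) * fact (2*j)) :: 'a::field_char_0)"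
proof -
  have "pfactor N j = (of_nat (\<Prod>i\<in>{1..j}. (2*N + j) + i) / of_nat (\<Prod>i\<in>{1..j}. j + i) :: 'a)"
    unfolding pfactor_def prod_dividef of_nat_prod by (simp add: add_ac)
  also have "\<dots> = of_nat (fact (2*N + 2*j) * fact j) / of_nat (fact (2*N + j) * fact (2*j))"
  proof (rule of_nat_frac_eq)
    show "(\<Prod>i\<in>{1..j}. (2*N + j) + i) * (fact (2*N + j) * fact (2*j))
        = fact (2*N + 2*j) * fact j * (\<Prod>i\<in>{1..j}. j + i)"
      using prod_shift_mult_fact[where b="2*N + j" and j=j] prod_shift_mult_fact[where b=j and j=j]
      by (simp add: mult_2 mult_2_right ac_simps)
  qed (simp_all add: prod_pos)
  finally show ?thesis .
qed

definition row_ratio :: "nat \<Rightarrow> nat \<Rightarrow> 'a::field_char_0" where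
  "row_ratio N j = of_nat ((2*N + 2*j + 2) * (2*N + 2*j + 1)) / of_nat ((2*N + j + 1) * (4*j + 2))"

definition param_ratio :: "nat \<Rightarrow> nat \<Rightarrow> 'a::field_char_0" where
  "param_ratio N j = of_nat ((2*N + j + 2) * (2*N + j + 1)) / of_nat ((2*N + 2*j + 2) * (2*N + 2*j + 1))"

lemma pfactor_Suc: "pfactor N (Suc j) = pfactor N j * (row_ratio N j :: 'a::field_char_0)"
proof -
  have e: "2*N + 2*Suc j = Suc (Suc (2*N + 2*j))" "2*N + Suc j = Suc (2*N + j)" "2*Suc j = Suc (Suc (2*j))"
    by simp_all
  show ?thesis
    unfolding pfactor_eq_fact row_ratio_def of_nat_frac_mult
    by (rule of_nat_frac_eq) (simp_all add: e algebra_simps)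
qed

lemma pfactor_param_Suc: "pfactor N j = pfactor (Suc N) j * (param_ratio N j :: 'a::field_char_0)"
proof -
  have e: "2*Suc N + 2*j = Suc (Suc (2*N + 2*j))" "2*Suc N + j = Suc (Suc (2*N + j))"
    by simp_all
  show ?thesis
    unfolding pfactor_eq_fact param_ratio_def of_nat_frac_mult
    by (rule of_nat_frac_eq) (simp_all add: e algebra_simps)
qed

lemma row_ratio_minus_one:
  "row_ratio N j - 1 = (of_nat (2*N * (2*N + 1)) / of_nat ((2*N + j + 1) * (4*j + 2)) :: 'a::field_char_0)"
proof -
  have "(2*N + 2*j + 2) * (2*N + 2*j + 1) = (2*N + j + 1) * (4*j + 2) + 2*N * (2*N + 1)"
    by (simp add: algebra_simps)
  moreover have "(of_nat ((2*N + j + 1) * (4*j + 2)) :: 'a) \<noteq> 0"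
    by (simp only: of_nat_eq_0_iff) simp
  ultimately show ?thesis
    unfolding row_ratio_def by (simp only: of_nat_add add_divide_distrib divide_self) simp
qed

lemma pprod_Suc: "pprod (Suc m) N = pprod m N * pfactor N m"
proof -
  define f where "f = (\<lambda>(i::nat, j::nat). (of_nat (2*N + i + j) / of_nat (i + j) :: complex))"
  let ?S = "\<lambda>m. {(i::nat, j::nat). 1 \<le> i \<and> i \<le> j \<and> j + 1 \<le> m}"
  have S_Suc: "?S (Suc m) = ?S m \<union> (\<lambda>i. (i, m)) ` {1..m}" by auto
  have "finite (?S m)" by (rule finite_subset[of _ "{..m} \<times> {..m}"]) auto
  then have "prod f (?S (Suc m)) = prod f (?S m) * prod f ((\<lambda>i. (i, m)) ` {1..m})"
    unfolding S_Suc by (intro prod.union_disjoint) auto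
  also have "prod f ((\<lambda>i. (i, m)) ` {1..m}) = (\<Prod>i\<in>{1..m}. f (i, m))"
    by (rule prod.reindex_cong[of "\<lambda>i. (i, m)"]) (auto simp: inj_on_def)
  finally show ?thesis unfolding pprod_def pfactor_def f_def by simp
qed

lemma pprod_0 [simp]: "pprod 0 N = 1"
  by (simp add: pprod_def)

lemma pprod_param_0 [simp]: "pprod m 0 = 1"
proof -
  have pfactor_0: "pfactor 0 j = 1" for j
    unfolding pfactor_def by (rule prod.neutral) (auto simp flip: of_nat_add)
  show ?thesis by (induction m) (simp_all add: pprod_Suc pfactor_0)
qed

lemma pprod_nonzero: "pprod m N \<noteq> 0"
  by (induction m) (simp_all add: pprod_Suc pfactor_eq_fact)

lemma pprod_param_shift: "pprod m N = pprod m (Suc N) * (\<Prod>l<m. param_ratio N l)"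
  by (induction m) (simp_all add: pprod_Suc pfactor_param_Suc[of N])

definition param_ratio_quot :: "nat \<Rightarrow> nat \<Rightarrow> 'a::field_char_0" where
  "param_ratio_quot N n = of_nat ((2*N + n + 4) * (2*N + n + 3) * (2*N + n + 3) * (2*N + n + 2))
     / of_nat ((2*N + 2*n + 4) * (2*N + 2*n + 3) * (2*N + 3) * (2*N + 2))"

lemma prod_param_ratio_Suc:
  "(\<Prod>l<Suc n. param_ratio (Suc N) l) = (\<Prod>l<Suc n. param_ratio N l) * (param_ratio_quot N n :: 'a::field_char_0)"
proof (induction n)
  case 0
  have e: "2*Suc N + 0 + 2 = 2*N + 4" "2*Suc N + 0 + 1 = 2*N + 3"
    "2*Suc N + 2*0 + 2 = 2*N + 4" "2*Suc N + 2*0 + 1 = 2*N + 3"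
    "2*N + 0 + 1 = 2*N + 1" "2*N + 0 + 2 = 2*N + 2" "2*N + 0 + 3 = 2*N + 3" "2*N + 0 + 4 = 2*N + 4"
    "2*N + 2*0 + 1 = 2*N + 1" "2*N + 2*0 + 2 = 2*N + 2" "2*N + 2*0 + 3 = 2*N + 3" "2*N + 2*0 + 4 = 2*N + 4"
    by simp_all
  \<comment> \<open>After rewriting with \<open>e\<close> both sides are products of the same linear factors, so
    AC-normalisation suffices; expanding the polynomials instead is prohibitively slow.\<close>
  have "param_ratio (Suc N) 0 = param_ratio N 0 * (param_ratio_quot N 0 :: 'a)"
    unfolding param_ratio_def param_ratio_quot_def of_nat_frac_mult e
    by (rule of_nat_frac_eq) (simp_all only: mult_ac, simp_all)
  then show ?case by simp
next
  case (Suc n)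
  have e: "2*Suc N + Suc n + 2 = 2*N + n + 5" "2*Suc N + Suc n + 1 = 2*N + n + 4"
    "2*Suc N + 2*Suc n + 2 = 2*N + 2*n + 6" "2*Suc N + 2*Suc n + 1 = 2*N + 2*n + 5"
    "2*N + Suc n + 1 = 2*N + n + 2" "2*N + Suc n + 2 = 2*N + n + 3"
    "2*N + Suc n + 3 = 2*N + n + 4" "2*N + Suc n + 4 = 2*N + n + 5"
    "2*N + 2*Suc n + 1 = 2*N + 2*n + 3" "2*N + 2*Suc n + 2 = 2*N + 2*n + 4"
    "2*N + 2*Suc n + 3 = 2*N + 2*n + 5" "2*N + 2*Suc n + 4 = 2*N + 2*n + 6"
    by simp_all
  have "param_ratio_quot N n * param_ratio (Suc N) (Suc n) = param_ratio N (Suc n) * (param_ratio_quot N (Suc n) :: 'a)"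
    unfolding param_ratio_def param_ratio_quot_def of_nat_frac_mult e
    by (rule of_nat_frac_eq) (simp_all only: mult_ac, simp_all)
  with Suc.IH show ?case by (simp add: ac_simps)
qed

lemma param_ratio_quot_row_ratio:
  "param_ratio_quot j n * (row_ratio (Suc j) (Suc n) - 1)
     = param_ratio j (Suc n) * param_ratio j (Suc (Suc n)) * (row_ratio (Suc j) (Suc n) :: 'a::field_char_0)"
proof -
  have e: "2*Suc j * (2*Suc j + 1) = (2*j + 2) * (2*j + 3)"
    "2*Suc j + Suc n + 1 = 2*j + n + 4" "4*Suc n + 2 = 4*n + 6"
    "2*Suc j + 2*Suc n + 2 = 2*j + 2*n + 6" "2*Suc j + 2*Suc n + 1 = 2*j + 2*n + 5"
    "2*j + Suc n + 2 = 2*j + n + 3" "2*j + Suc n + 1 = 2*j + n + 2"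
    "2*j + 2*Suc n + 2 = 2*j + 2*n + 4" "2*j + 2*Suc n + 1 = 2*j + 2*n + 3"
    "2*j + Suc (Suc n) + 2 = 2*j + n + 4" "2*j + Suc (Suc n) + 1 = 2*j + n + 3"
    "2*j + 2*Suc (Suc n) + 2 = 2*j + 2*n + 6" "2*j + 2*Suc (Suc n) + 1 = 2*j + 2*n + 5"
    by (simp_all add: algebra_simps)
  show ?thesis
    unfolding row_ratio_minus_one
    unfolding row_ratio_def param_ratio_def param_ratio_quot_def e of_nat_frac_mult
    by (rule of_nat_frac_eq) (simp_all only: mult_ac, simp_all add: algebra_simps)
qed

text \<open>All five products are expressed through \<open>pprod (n+1) (j+2)\<close>, two products of
  \<open>param_ratio\<close> and one \<open>pfactor\<close>.\<close>

lemma pprod_condensation: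
  "pprod (n+3) (j+1) * pprod (n+1) (j+1) = pprod (n+1) (j+2) * pprod (n+3) j + pprod (n+2) (j+1)^2"
proof -
  define Z where "Z = pprod (n+1) (j+2)"
  define R1 :: complex where "R1 = (\<Prod>l<Suc n. param_ratio (Suc j) l)"
  define R0 :: complex where "R0 = (\<Prod>l<Suc n. param_ratio j l)"
  define G :: complex where "G = pfactor (Suc j) (Suc n)"
  define s :: complex where "s = row_ratio (Suc j) (Suc n)"
  have p_n1_j1: "pprod (n+1) (j+1) = Z * R1"
    unfolding Z_def R1_def using pprod_param_shift[of "Suc n" "Suc j"] by simp
  have p_n1_j: "pprod (n+1) j = Z * R1 * R0"
    unfolding R0_def p_n1_j1[symmetric] using pprod_param_shift[of "Suc n" j] by simp
  have p_n2_j1: "pprod (n+2) (j+1) = Z * R1 * G"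
    unfolding G_def p_n1_j1[symmetric] by (simp add: pprod_Suc numeral_2_eq_2)
  have G_Suc: "pfactor (Suc j) (Suc (Suc n)) = G * s"
    unfolding G_def s_def by (rule pfactor_Suc)
  have p_n3_j1: "pprod (n+3) (j+1) = Z * R1 * G * (G * s)"
    using p_n2_j1 G_Suc by (simp add: pprod_Suc numeral_3_eq_3 numeral_2_eq_2)
  have "pprod (n+3) j = pprod (n+1) j * pfactor j (Suc n) * pfactor j (Suc (Suc n))"
    by (simp add: pprod_Suc numeral_3_eq_3)
  also have "\<dots> = Z * R1 * R0 * (G * param_ratio j (Suc n)) * (G * s * param_ratio j (Suc (Suc n)))"
    unfolding p_n1_j pfactor_param_Suc[of j "Suc n"] pfactor_param_Suc[of j "Suc (Suc n)"] G_Suc G_def ..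
  finally have p_n3_j: "pprod (n+3) j = Z * R1 * R0 * (G * param_ratio j (Suc n)) * (G * s * param_ratio j (Suc (Suc n)))" .
  have R1_R0: "R1 = R0 * param_ratio_quot j n"
    unfolding R1_def R0_def by (rule prod_param_ratio_Suc)
  have "Z * R1 * G * (G * s) * (Z * R1) - (Z * R1 * G)^2 = Z * Z * R1 * G * G * R0 * (param_ratio_quot j n * (s - 1))"
    unfolding R1_R0 by (simp add: algebra_simps power2_eq_square)
  also have "\<dots> = Z * (Z * R1 * R0 * (G * param_ratio j (Suc n)) * (G * s * param_ratio j (Suc (Suc n))))"
    unfolding s_def param_ratio_quot_row_ratio by (simp add: ac_simps)
  finally show ?thesis unfolding p_n1_j1 p_n2_j1 p_n3_j1 p_n3_j Z_def[symmetric] by (simp add: algebra_simps)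
qed

lemma catalan_eq_fact: "catalan m = of_nat (fact (2*m)) / of_nat (fact m * fact (Suc m))"
  unfolding catalan_def
proof (rule of_nat_frac_eq)
  have "((2*m) choose m) * (fact m * fact (Suc m)) = (fact m * fact m * ((2*m) choose m)) * (m + 1)"
    by (simp add: algebra_simps)
  also have "\<dots> = fact (2*m) * (m + 1)"
    using binomial_fact_lemma[of m "2*m"] by (simp add: mult_2)
  finally show "((2*m) choose m) * (fact m * fact (Suc m)) = fact (2*m) * (m + 1)" .
qed simp_all

lemma catalan_eq_pprod: "catalan m = pprod m 1"
proof (induction m)
  case 0
  show ?case by (simp add: catalan_def)
next
  case (Suc m)
  have "catalan (Suc m) = catalan m * pfactor 1 m"
    unfolding catalan_eq_fact pfactor_eq_fact of_nat_frac_mult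
    by (rule of_nat_frac_eq) (simp_all add: ac_simps)
  with Suc.IH show ?case by (simp add: pprod_Suc)
qed

lemma neg_one_power_choose_two_add_two:
  "(-1 :: 'a::ring_1) ^ ((n + 2) choose 2) = - ((-1) ^ (n choose 2))"
proof -
  have "(n + 2) choose 2 = (n choose 2) + (2*n + 1)"
    by (simp add: numeral_2_eq_2 choose_two)
  then show ?thesis by (simp add: power_add)
qed

text \<open>\<open>hankel_closed_form c (k-1) n\<close> is the value claimed for \<open>v\<^sub>k(n+k)\<close>.\<close>

definition hankel_closed_form :: "complex \<Rightarrow> nat \<Rightarrow> nat \<Rightarrow> complex" where
  "hankel_closed_form c K n = (-1) ^ ((n+1) choose 2) * c^K * pprod (n+1) K"

lemma hankel_closed_form_condensation:
  "hankel_closed_form c K (n+2) * hankel_closed_form c (K+2) n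
     = hankel_closed_form c (K+1) (n+2) * hankel_closed_form c (K+1) n + hankel_closed_form c (K+1) (n+1)^2"
proof -
  have sign: "(-1::complex) ^ ((n+2+1) choose 2) = - ((-1) ^ ((n+1) choose 2))"
    using neg_one_power_choose_two_add_two[of "n+1"] by (simp add: ac_simps)
  have sign_sq: "(-1::complex) ^ m * (-1) ^ m = 1" "(-1::complex) ^ m * ((-1) ^ m * x) = x" for m x
    by (simp_all flip: power_add)
  have cond: "pprod (n+2+1) (K+1) * pprod (n+1) (K+1)
      = pprod (n+1) (K+2) * pprod (n+2+1) K + pprod (n+1+1) (K+1)^2"
    using pprod_condensation[of n K] by (simp add: numeral_3_eq_3)
  have "hankel_closed_form c K (n+2) * hankel_closed_form c (K+2) n
      = - ((c^(K+1))^2 * (pprod (n+1) (K+2) * pprod (n+2+1) K))"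
    unfolding hankel_closed_form_def sign by (simp add: sign_sq power_add power2_eq_square ac_simps)
  also have "\<dots> = (c^(K+1))^2 * (pprod (n+1+1) (K+1)^2 - pprod (n+2+1) (K+1) * pprod (n+1) (K+1))"
    unfolding cond by (simp add: algebra_simps)
  also have "\<dots> = hankel_closed_form c (K+1) (n+2) * hankel_closed_form c (K+1) n
      + hankel_closed_form c (K+1) (n+1)^2"
    unfolding hankel_closed_form_def sign by (simp add: sign_sq power2_eq_square algebra_simps)
  finally show ?thesis .
qed

lemma hankel_closed_form_nonzero: "c \<noteq> 0 \<Longrightarrow> hankel_closed_form c K n \<noteq> 0"
  by (simp add: hankel_closed_form_def pprod_nonzero)

theorem lemma5:
  fixes a :: "int \<Rightarrow> complex" and c :: complex
  assumes neg: "\<And>n. n < 0 \<Longrightarrow> a n = 0"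
    and a0: "a 0 = 1"
    and c_nz: "c \<noteq> 0"
    and hv2: "\<And>n::nat. n \<ge> 1 \<Longrightarrow>
               hankel_v a 2 n = (-1) ^ ((n - 1) choose 2) * c * catalan (n - 1)"
  shows "\<And>(n::nat) (k::nat). k \<ge> 1 \<Longrightarrow>
           hankel_v a (int k) (n + k) = (-1) ^ ((n + 1) choose 2) * c ^ (k - 1) * pprod (n + 1) (k - 1)"
proof -
  define u where "u = (\<lambda>K n. hankel_v a (int (K+1)) (n+K+1))"
  have u_eq: "u = hankel_closed_form c"
  proof (rule condensation_recurrence_unique)
    show "u (K+1) (n+2) \<noteq> 0 \<Longrightarrow>
        u K (n+2) * u (K+2) n = u (K+1) (n+2) * u (K+1) n + u (K+1) (n+1)^2" for K n
      unfolding u_def by (rule hankel_v_diagonal_recurrence)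
    show "u 0 = hankel_closed_form c 0"
      using hankel_v_one[of a] neg a0 by (simp add: u_def hankel_closed_form_def fun_eq_iff)
    show "u 1 = hankel_closed_form c 1"
      using hv2 by (simp add: u_def hankel_closed_form_def catalan_eq_pprod fun_eq_iff)
  qed (use hankel_closed_form_condensation hankel_closed_form_nonzero[OF c_nz] in auto)
  fix n k :: nat
  assume "k \<ge> 1"
  then have "hankel_v a (int k) (n + k) = u (k - 1) n" by (simp add: u_def)
  then show "hankel_v a (int k) (n + k) = (-1) ^ ((n + 1) choose 2) * c ^ (k - 1) * pprod (n + 1) (k - 1)"
    by (simp add: u_eq hankel_closed_form_def)
qed

end
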